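(* For every set $\Gamma$ of formulas and every formula $\alpha$ of the language of $\mathbb{F}$ containing no nested modal operators, $\Gamma\models^{\mathbb{F}}\alpha$ if and only if $\Gamma^*\models\alpha^*$, where $\Gamma^*=\{\gamma^*:\gamma\in\Gamma\}$.
   Context: Propositional formulas are built from a countable set of variables with $\bot,\land,\lor,\to,\leftrightarrow,\neg$. The language of $\mathbb{F}$ adds unary $\Box,\lozenge$ and dyadic $\bigcirc(\psi/\varphi)$; a formula has no nested modal operators (is flat) if $\Box,\lozenge,\bigcirc$ are applied only to propositional formulas. A preference model is $\langle S,\succeq,V\rangle$ with $S$ a set, $\succeq\subseteq S\times S$ arbitrary, $V$ a valuation; for a set $X\subseteq S$, $\mathit{most}(X)=\{s\in X:\forall v\in X\,(v\succeq s\Rightarrow s\succeq v)\}$; it satisfies limitedness if for every formula $\varphi$, $\|\varphi\|\neq\emptyset\Rightarrow\mathit{most}(\|\varphi\|)\neq\emptyset$, where $\|\varphi\|$ is the truth set. Truth: Boolean clauses as usual; $\Box\varphi$ holds at $s$ iff $\varphi$ holds at every state; $\lozenge\varphi$ iff $\varphi$ holds at some state; $\bigcirc(\psi/\varphi)$ holds at $s$ iff $\mathit{most}(\|\varphi\|)\subseteq\|\psi\|$. $\Gamma\models^{\mathbb{F}}\alpha$ means: in every preference model satisfying limitedness, at every state where all of $\Gamma$ hold, $\alpha$ holds. The language $\mathcal{L}_T$ is $\alpha::=\varphi\mid\varphi\rightsquigarrow\varphi\mid B(\alpha)\mid\alpha*\alpha\mid\neg\alpha$ ($\varphi$ propositional,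 $*$ binary connective). A Trust model is $\mathcal{M}=\langle S,(S_i)_{i\in I},(\succeq_i)_{i\in I},R,V\rangle$ where $R\subseteq S\times S$ is serial and transitive, $(S_i)_{i\in I}$ is a partition of $S$, each $\succeq_i\subseteq S_i\times S_i$ is arbitrary, $V$ assigns to each variable a subset of $S$, and for each $i$ and each propositional $\varphi$: $\|\varphi\|_i\neq\emptyset\Rightarrow\mathit{most}(\|\varphi\|_i)\neq\emptyset$, where $\|\varphi\|_i=\{v\in S_i:\mathcal{M},v\models\varphi\}$ and $\mathit{most}(\|\varphi\|_i)=\{s\in\|\varphi\|_i:\forall v\in\|\varphi\|_i\,(v\succeq_i s\Rightarrow s\succeq_i v)\}$. Truth: $s\models p$ iff $s\in V(p)$; Boolean clauses as usual; $s\models\varphi\rightsquigarrow\psi$ iff $\mathit{most}(\|\varphi\|_i)\subseteq\|\psi\|_i$ for the $i$ with $s\in S_i$; $s\models B(\alpha)$ iff $v\models\alpha$ for all $v$ with $sRv$. $\Gamma\models\alpha$ means: in every Trust model, at every state where all of $\Gamma$ hold, $\alpha$ holds. Translation $^*$: $\varphi^*=\varphi$ for propositional $\varphi$, $(\Box\varphi)^*=\neg\varphi\rightsquigarrow\bot$, $(\lozenge\varphi)^*=\neg(\varphi\rightsquigarrow\bot)$, $(\bigcirc(\psi/\varphi))^*=\varphi\rightsquigarrow\psi$, commuting with Boolean connectives. *)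

theory Defs
  imports Main
begin

datatype pform = PVar nat | PBot | PAnd pform pform | POr pform pform
  | PImp pform pform | PIff pform pform | PNeg pform

primrec psat :: "(nat \<Rightarrow> 's set) \<Rightarrow> 's \<Rightarrow> pform \<Rightarrow> bool" where
  "psat V s (PVar p) = (s \<in> V p)"
| "psat V s PBot = False"
| "psat V s (PAnd a b) = (psat V s a \<and> psat V s b)"
| "psat V s (POr a b) = (psat V s a \<or> psat V s b)"
| "psat V s (PImp a b) = (psat V s a \<longrightarrow> psat V s b)"
| "psat V s (PIff a b) = (psat V s a \<longleftrightarrow> psat V s b)"
| "psat V s (PNeg a) = (\<not> psat V s a)"

definition most :: "'s rel \<Rightarrow> 's set \<Rightarrow> 's set" where
  "most P X = {s \<in> X. \<forall>v\<in>X. (v, s) \<in> P \<longrightarrow> (s, v) \<in> P}"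

text \<open>FOb psi phi stands for the dyadic obligation O(psi/phi).\<close>
datatype fform = FVar nat | FBot | FAnd fform fform | FOr fform fform
  | FImp fform fform | FIff fform fform | FNeg fform
  | FBox fform | FDia fform | FOb fform fform

primrec modal_free :: "fform \<Rightarrow> bool" where
  "modal_free (FVar p) = True"
| "modal_free FBot = True"
| "modal_free (FAnd a b) = (modal_free a \<and> modal_free b)"
| "modal_free (FOr a b) = (modal_free a \<and> modal_free b)"
| "modal_free (FImp a b) = (modal_free a \<and> modal_free b)"
| "modal_free (FIff a b) = (modal_free a \<and> modal_free b)"
| "modal_free (FNeg a) = modal_free a"
| "modal_free (FBox a) = False"
| "modal_free (FDia a) = False"
| "modal_free (FOb a b) = False"

text \<open>No nested modal operators: modalities are applied only to propositional formulas.\<close>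
primrec flat :: "fform \<Rightarrow> bool" where
  "flat (FVar p) = True"
| "flat FBot = True"
| "flat (FAnd a b) = (flat a \<and> flat b)"
| "flat (FOr a b) = (flat a \<and> flat b)"
| "flat (FImp a b) = (flat a \<and> flat b)"
| "flat (FIff a b) = (flat a \<and> flat b)"
| "flat (FNeg a) = flat a"
| "flat (FBox a) = modal_free a"
| "flat (FDia a) = modal_free a"
| "flat (FOb a b) = (modal_free a \<and> modal_free b)"

text \<open>Reading a modal-free F-formula as a propositional formula
  (modal cases are irrelevant and mapped arbitrarily).\<close>
primrec to_prop :: "fform \<Rightarrow> pform" where
  "to_prop (FVar p) = PVar p"
| "to_prop FBot = PBot"
| "to_prop (FAnd a b) = PAnd (to_prop a) (to_prop b)"
| "to_prop (FOr a b) = POr (to_prop a) (to_prop b)"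
| "to_prop (FImp a b) = PImp (to_prop a) (to_prop b)"
| "to_prop (FIff a b) = PIff (to_prop a) (to_prop b)"
| "to_prop (FNeg a) = PNeg (to_prop a)"
| "to_prop (FBox a) = PBot"
| "to_prop (FDia a) = PBot"
| "to_prop (FOb a b) = PBot"

primrec fsat :: "'s set \<Rightarrow> 's rel \<Rightarrow> (nat \<Rightarrow> 's set) \<Rightarrow> 's \<Rightarrow> fform \<Rightarrow> bool" where
  "fsat S P V s (FVar p) = (s \<in> V p)"
| "fsat S P V s FBot = False"
| "fsat S P V s (FAnd a b) = (fsat S P V s a \<and> fsat S P V s b)"
| "fsat S P V s (FOr a b) = (fsat S P V s a \<or> fsat S P V s b)"
| "fsat S P V s (FImp a b) = (fsat S P V s a \<longrightarrow> fsat S P V s b)"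
| "fsat S P V s (FIff a b) = (fsat S P V s a \<longleftrightarrow> fsat S P V s b)"
| "fsat S P V s (FNeg a) = (\<not> fsat S P V s a)"
| "fsat S P V s (FBox a) = (\<forall>t\<in>S. fsat S P V t a)"
| "fsat S P V s (FDia a) = (\<exists>t\<in>S. fsat S P V t a)"
| "fsat S P V s (FOb psi phi) =
     (most P {t \<in> S. fsat S P V t phi} \<subseteq> {t \<in> S. fsat S P V t psi})"

definition pref_model :: "'s set \<Rightarrow> 's rel \<Rightarrow> (nat \<Rightarrow> 's set) \<Rightarrow> bool" where
  "pref_model S P V \<longleftrightarrow> P \<subseteq> S \<times> S \<and> (\<forall>p. V p \<subseteq> S)"

definition limitedness :: "'s set \<Rightarrow> 's rel \<Rightarrow> (nat \<Rightarrow> 's set) \<Rightarrow> bool" where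
  "limitedness S P V \<longleftrightarrow>
     (\<forall>phi. {t \<in> S. fsat S P V t phi} \<noteq> {} \<longrightarrow> most P {t \<in> S. fsat S P V t phi} \<noteq> {})"

definition fcons :: "'s itself \<Rightarrow> fform set \<Rightarrow> fform \<Rightarrow> bool" where
  "fcons _ \<Gamma> \<alpha> \<longleftrightarrow>
     (\<forall>(S :: 's set) P V. pref_model S P V \<and> limitedness S P V \<longrightarrow>
        (\<forall>s\<in>S. (\<forall>\<gamma>\<in>\<Gamma>. fsat S P V s \<gamma>) \<longrightarrow> fsat S P V s \<alpha>))"

datatype tform = TProp pform | TCond pform pform | TB tform
  | TAnd tform tform | TOr tform tform | TImp tform tform | TIff tform tform
  | TNeg tform

definition trust_model ::
  "'s set \<Rightarrow> 'i set \<Rightarrow> ('i \<Rightarrow> 's set) \<Rightarrow> ('i \<Rightarrow> 's rel) \<Rightarrow> 's rel \<Rightarrow> (nat \<Rightarrow> 's set) \<Rightarrow> bool"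
where
  "trust_model S I C Pr R V \<longleftrightarrow>
     R \<subseteq> S \<times> S \<and> (\<forall>s\<in>S. \<exists>v. (s, v) \<in> R) \<and> trans R
   \<and> (\<forall>i\<in>I. C i \<noteq> {}) \<and> (\<forall>i\<in>I. \<forall>j\<in>I. i \<noteq> j \<longrightarrow> C i \<inter> C j = {})
   \<and> (\<Union>i\<in>I. C i) = S
   \<and> (\<forall>i\<in>I. Pr i \<subseteq> C i \<times> C i)
   \<and> (\<forall>p. V p \<subseteq> S)
   \<and> (\<forall>i\<in>I. \<forall>phi. {v \<in> C i. psat V v phi} \<noteq> {} \<longrightarrow>
                     most (Pr i) {v \<in> C i. psat V v phi} \<noteq> {})"

primrec tsat ::
  "'i set \<Rightarrow> ('i \<Rightarrow> 's set) \<Rightarrow> ('i \<Rightarrow> 's rel) \<Rightarrow> 's rel \<Rightarrow> (nat \<Rightarrow> 's set) \<Rightarrow> 's \<Rightarrow> tform \<Rightarrow> bool"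
where
  "tsat I C Pr R V s (TProp a) = psat V s a"
| "tsat I C Pr R V s (TCond a b) =
     (\<exists>i\<in>I. s \<in> C i \<and> most (Pr i) {v \<in> C i. psat V v a} \<subseteq> {v \<in> C i. psat V v b})"
| "tsat I C Pr R V s (TB a) = (\<forall>v. (s, v) \<in> R \<longrightarrow> tsat I C Pr R V v a)"
| "tsat I C Pr R V s (TAnd a b) = (tsat I C Pr R V s a \<and> tsat I C Pr R V s b)"
| "tsat I C Pr R V s (TOr a b) = (tsat I C Pr R V s a \<or> tsat I C Pr R V s b)"
| "tsat I C Pr R V s (TImp a b) = (tsat I C Pr R V s a \<longrightarrow> tsat I C Pr R V s b)"
| "tsat I C Pr R V s (TIff a b) = (tsat I C Pr R V s a \<longleftrightarrow> tsat I C Pr R V s b)"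
| "tsat I C Pr R V s (TNeg a) = (\<not> tsat I C Pr R V s a)"

definition tcons :: "'s itself \<Rightarrow> 'i itself \<Rightarrow> tform set \<Rightarrow> tform \<Rightarrow> bool" where
  "tcons _ _ \<Gamma> \<alpha> \<longleftrightarrow>
     (\<forall>(S :: 's set) (I :: 'i set) C Pr R V. trust_model S I C Pr R V \<longrightarrow>
        (\<forall>s\<in>S. (\<forall>\<gamma>\<in>\<Gamma>. tsat I C Pr R V s \<gamma>) \<longrightarrow> tsat I C Pr R V s \<alpha>))"

fun trans_star :: "fform \<Rightarrow> tform" where
  "trans_star f =
    (if modal_free f then TProp (to_prop f) else
     (case f of
        FBox a \<Rightarrow> TCond (PNeg (to_prop a)) PBot
      | FDia a \<Rightarrow> TNeg (TCond (to_prop a) PBot)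
      | FOb psi phi \<Rightarrow> TCond (to_prop phi) (to_prop psi)
      | FAnd a b \<Rightarrow> TAnd (trans_star a) (trans_star b)
      | FOr a b \<Rightarrow> TOr (trans_star a) (trans_star b)
      | FImp a b \<Rightarrow> TImp (trans_star a) (trans_star b)
      | FIff a b \<Rightarrow> TIff (trans_star a) (trans_star b)
      | FNeg a \<Rightarrow> TNeg (trans_star a)
      | _ \<Rightarrow> TProp (to_prop f)))"

end

theory Submission
  imports Defs
begin

text \<open>Inside a Trust model, the translation of a flat formula is evaluated within the cell of
  the current state alone: the conditionals of the translation only inspect that cell, and the
  belief operator does not occur. Each cell, with its preference relation and the valuation
  restricted to it, is a preference model; it satisfies limitedness because within a fixed model
  every F-formula agrees with a propositional one, modal formulas having a state-independent
  truth value. Conversely, a preference model is a Trust model with a single cell and the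
  universal accessibility relation.\<close>

primrec of_prop :: "pform \<Rightarrow> fform" where
  "of_prop (PVar p) = FVar p"
| "of_prop PBot = FBot"
| "of_prop (PAnd a b) = FAnd (of_prop a) (of_prop b)"
| "of_prop (POr a b) = FOr (of_prop a) (of_prop b)"
| "of_prop (PImp a b) = FImp (of_prop a) (of_prop b)"
| "of_prop (PIff a b) = FIff (of_prop a) (of_prop b)"
| "of_prop (PNeg a) = FNeg (of_prop a)"

lemma fsat_of_prop: "fsat S P V t (of_prop q) \<longleftrightarrow> psat V t q"
  by (induction q) auto

lemma fsat_to_prop: "modal_free f \<Longrightarrow> fsat S P V t f \<longleftrightarrow> psat V t (to_prop f)"
  by (induction f) auto

lemma psat_restrict: "t \<in> X \<Longrightarrow> psat (\<lambda>p. V p \<inter> X) t q \<longleftrightarrow> psat V t q"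
  by (induction q) auto

lemma fsat_restrict: "t \<in> X \<Longrightarrow> fsat X P (\<lambda>p. V p \<inter> X) t f \<longleftrightarrow> fsat X P V t f"
  by (induction f arbitrary: t) (simp_all cong: conj_cong)

definition pconst :: "bool \<Rightarrow> pform" where
  "pconst b = (if b then PNeg PBot else PBot)"

lemma psat_pconst [simp]: "psat V t (pconst b) \<longleftrightarrow> b"
  unfolding pconst_def by simp

primrec prop_equiv :: "'s set \<Rightarrow> 's rel \<Rightarrow> (nat \<Rightarrow> 's set) \<Rightarrow> fform \<Rightarrow> pform" where
  "prop_equiv S P V (FVar p) = PVar p"
| "prop_equiv S P V FBot = PBot"
| "prop_equiv S P V (FAnd a b) = PAnd (prop_equiv S P V a) (prop_equiv S P V b)"
| "prop_equiv S P V (FOr a b) = POr (prop_equiv S P V a) (prop_equiv S P V b)"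
| "prop_equiv S P V (FImp a b) = PImp (prop_equiv S P V a) (prop_equiv S P V b)"
| "prop_equiv S P V (FIff a b) = PIff (prop_equiv S P V a) (prop_equiv S P V b)"
| "prop_equiv S P V (FNeg a) = PNeg (prop_equiv S P V a)"
| "prop_equiv S P V (FBox a) = pconst (\<forall>t\<in>S. fsat S P V t a)"
| "prop_equiv S P V (FDia a) = pconst (\<exists>t\<in>S. fsat S P V t a)"
| "prop_equiv S P V (FOb psi phi) =
     pconst (most P {t \<in> S. fsat S P V t phi} \<subseteq> {t \<in> S. fsat S P V t psi})"

lemma psat_prop_equiv: "psat V t (prop_equiv S P V f) \<longleftrightarrow> fsat S P V t f"
  by (induction f) auto

lemma limitedness_iff_propositional:
  "limitedness S P V \<longleftrightarrow>
     (\<forall>q. {t \<in> S. psat V t q} \<noteq> {} \<longrightarrow> most P {t \<in> S. psat V t q} \<noteq> {})"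
  (is "_ \<longleftrightarrow> (\<forall>q. ?limited {t \<in> S. psat V t q})")
proof
  assume lim: "limitedness S P V"
  show "\<forall>q. ?limited {t \<in> S. psat V t q}"
  proof
    fix q
    have "{t \<in> S. psat V t q} = {t \<in> S. fsat S P V t (of_prop q)}"
      by (simp add: fsat_of_prop)
    then show "?limited {t \<in> S. psat V t q}"
      using lim unfolding limitedness_def by presburger
  qed
next
  assume prop_lim: "\<forall>q. ?limited {t \<in> S. psat V t q}"
  show "limitedness S P V"
    unfolding limitedness_def
  proof
    fix f
    have "{t \<in> S. fsat S P V t f} = {t \<in> S. psat V t (prop_equiv S P V f)}"
      by (simp add: psat_prop_equiv)
    then show "?limited {t \<in> S. fsat S P V t f}"
      using prop_lim by presburger
  qed
qed

lemma most_subset: "most P X \<subseteq> X"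
  unfolding most_def by blast

lemma trust_model_cell_unique:
  "trust_model S I C Pr R V \<Longrightarrow> i \<in> I \<Longrightarrow> j \<in> I \<Longrightarrow> s \<in> C i \<Longrightarrow> s \<in> C j \<Longrightarrow> j = i"
  unfolding trust_model_def by blast

lemma trust_model_most_nonempty:
  "trust_model S I C Pr R V \<Longrightarrow> i \<in> I \<Longrightarrow> {v \<in> C i. psat V v q} \<noteq> {} \<Longrightarrow>
     most (Pr i) {v \<in> C i. psat V v q} \<noteq> {}"
  unfolding trust_model_def by blast

lemma tsat_TCond_cell:
  assumes "trust_model S I C Pr R V" and "i \<in> I" and "s \<in> C i"
  shows "tsat I C Pr R V s (TCond a b) \<longleftrightarrow>
    most (Pr i) {v \<in> C i. psat V v a} \<subseteq> {v \<in> C i. psat V v b}"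
  using assms trust_model_cell_unique[OF assms(1)] by (simp (no_asm_simp)) blast

lemma tsat_TCond_PBot_cell:
  assumes "trust_model S I C Pr R V" and "i \<in> I" and "s \<in> C i"
  shows "tsat I C Pr R V s (TCond a PBot) \<longleftrightarrow> (\<forall>v\<in>C i. \<not> psat V v a)"
proof -
  have "most (Pr i) {v \<in> C i. psat V v a} = {} \<longleftrightarrow> {v \<in> C i. psat V v a} = {}"
    by (metis most_subset subset_empty trust_model_most_nonempty[OF assms(1,2)])
  then show ?thesis
    by (simp add: tsat_TCond_cell[OF assms] del: tsat.simps(2)) blast
qed

(* The single defining equation of trans_star has a variable on the left, so simp would unfold
   it forever. *)
declare trans_star.simps [simp del]

lemma tsat_trans_star_cell:
  assumes tm: "trust_model S I C Pr R V" and i: "i \<in> I" and s: "s \<in> C i" and "flat f"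
  shows "tsat I C Pr R V s (trans_star f) \<longleftrightarrow> fsat (C i) (Pr i) V s f"
  using \<open>flat f\<close>
proof (induction f)
  case (FBox a)
  then show ?case
    by (subst trans_star.simps)
      (simp add: tsat_TCond_PBot_cell[OF tm i s] fsat_to_prop del: tsat.simps(2))
next
  case (FDia a)
  then show ?case
    by (subst trans_star.simps)
      (simp add: tsat_TCond_PBot_cell[OF tm i s] fsat_to_prop del: tsat.simps(2))
next
  case (FOb psi phi)
  then show ?case
    by (subst trans_star.simps)
      (simp add: tsat_TCond_cell[OF tm i s] fsat_to_prop del: tsat.simps(2))
qed (subst trans_star.simps, simp add: fsat_to_prop)+

lemma cell_pref_model:
  "trust_model S I C Pr R V \<Longrightarrow> i \<in> I \<Longrightarrow> pref_model (C i) (Pr i) (\<lambda>p. V p \<inter> C i)"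
  unfolding trust_model_def pref_model_def by blast

lemma cell_limitedness:
  assumes "trust_model S I C Pr R V" and "i \<in> I"
  shows "limitedness (C i) (Pr i) (\<lambda>p. V p \<inter> C i)"
proof -
  have "{v \<in> C i. psat (\<lambda>p. V p \<inter> C i) v q} = {v \<in> C i. psat V v q}" for q
    by (simp add: psat_restrict cong: conj_cong)
  then show ?thesis
    using assms unfolding limitedness_iff_propositional trust_model_def by simp
qed

lemma trust_model_single_cell:
  assumes "pref_model S P V" and "limitedness S P V" and "S \<noteq> {}"
  shows "trust_model S {i} (\<lambda>_. S) (\<lambda>_. P) (S \<times> S) V"
  using assms unfolding trust_model_def pref_model_def limitedness_iff_propositional trans_def
  by auto

lemma tcons_trans_star_if_fcons:
  assumes flat_\<Gamma>: "\<forall>\<gamma>\<in>\<Gamma>. flat \<gamma>" and flat_\<alpha>: "flat \<alpha>" and F: "fcons TYPE('s) \<Gamma> \<alpha>"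
  shows "tcons TYPE('s) TYPE('i) (trans_star ` \<Gamma>) (trans_star \<alpha>)"
  unfolding tcons_def
proof (intro allI impI ballI)
  fix S :: "'s set" and I :: "'i set" and C Pr R V s
  assume tm: "trust_model S I C Pr R V" and "s \<in> S"
    and hyps: "\<forall>\<gamma>\<in>trans_star ` \<Gamma>. tsat I C Pr R V s \<gamma>"
  then obtain i where i: "i \<in> I" and s: "s \<in> C i"
    unfolding trust_model_def by blast
  let ?V = "\<lambda>p. V p \<inter> C i"
  have transfer: "tsat I C Pr R V s (trans_star f) \<longleftrightarrow> fsat (C i) (Pr i) ?V s f" if "flat f" for f
    using tsat_trans_star_cell[OF tm i s that] fsat_restrict[OF s] by simp
  have "\<forall>\<gamma>\<in>\<Gamma>. fsat (C i) (Pr i) ?V s \<gamma>"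
    using hyps flat_\<Gamma> transfer by simp
  then have "fsat (C i) (Pr i) ?V s \<alpha>"
    using F[unfolded fcons_def, rule_format,
        OF conjI[OF cell_pref_model[OF tm i] cell_limitedness[OF tm i]] s]
    by blast
  then show "tsat I C Pr R V s (trans_star \<alpha>)"
    using transfer flat_\<alpha> by simp
qed

lemma fcons_if_tcons_trans_star:
  assumes flat_\<Gamma>: "\<forall>\<gamma>\<in>\<Gamma>. flat \<gamma>" and flat_\<alpha>: "flat \<alpha>"
    and T: "tcons TYPE('s) TYPE('i) (trans_star ` \<Gamma>) (trans_star \<alpha>)"
  shows "fcons TYPE('s) \<Gamma> \<alpha>"
  unfolding fcons_def
proof (intro allI impI ballI)
  fix S :: "'s set" and P V s
  assume model: "pref_model S P V \<and> limitedness S P V" and s: "s \<in> S"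
    and hyps: "\<forall>\<gamma>\<in>\<Gamma>. fsat S P V s \<gamma>"
  define i :: 'i where "i = undefined"
  have tm: "trust_model S {i} (\<lambda>_. S) (\<lambda>_. P) (S \<times> S) V"
    using model s by (intro trust_model_single_cell) auto
  have transfer: "tsat {i} (\<lambda>_. S) (\<lambda>_. P) (S \<times> S) V s (trans_star f) \<longleftrightarrow> fsat S P V s f"
    if "flat f" for f
    using tsat_trans_star_cell[OF tm _ s that] by simp
  have "\<forall>\<gamma>\<in>trans_star ` \<Gamma>. tsat {i} (\<lambda>_. S) (\<lambda>_. P) (S \<times> S) V s \<gamma>"
    using hyps flat_\<Gamma> transfer by simp
  then have "tsat {i} (\<lambda>_. S) (\<lambda>_. P) (S \<times> S) V s (trans_star \<alpha>)"
    using T[unfolded tcons_def, rule_format, OF tm s] by blast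
  then show "fsat S P V s \<alpha>"
    using transfer flat_\<alpha> by simp
qed

theorem theorem3:
  fixes \<Gamma> :: "fform set" and \<alpha> :: fform
  assumes "\<forall>\<gamma>\<in>\<Gamma>. flat \<gamma>" and "flat \<alpha>"
  shows "fcons TYPE('s) \<Gamma> \<alpha> \<longleftrightarrow> tcons TYPE('s) TYPE('i) (trans_star ` \<Gamma>) (trans_star \<alpha>)"
  using tcons_trans_star_if_fcons[OF assms] fcons_if_tcons_trans_star[OF assms] by blast

end
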